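(* In the $\beta$-model with true parameter satisfying $\beta_1=\cdots=\beta_r$, for a fixed positive integer $r$, $$\|W_{22}-\widetilde W_{22}\|_{\max}\lesssim\frac{b_n^6}{n^3c_n^5},$$ where $W_{22}$ is the bottom-right $(n-r)\times(n-r)$ block of $W=V^{-1}-S$ and $\widetilde W_{22}$ is the bottom-right $(n-r)\times(n-r)$ block of $\widetilde W=\widetilde V^{-1}-\widetilde S$.
   Context: $\beta$-model: $a_{ij}=a_{ji}\in\{0,1\}$, $1\le i<j\le n$, independent with $P(a_{ij}=1)=e^{\beta_i+\beta_j}/(1+e^{\beta_i+\beta_j})$, $a_{ii}=0$; $d_i=\sum_{j\ne i}a_{ij}$. $V=(v_{ij})$ with $v_{ij}=e^{\beta_i+\beta_j}/(1+e^{\beta_i+\beta_j})^2$ ($i\ne j$), $v_{ii}=\sum_{j\ne i}v_{ij}$; $S=\mathrm{diag}(1/v_{11},\dots,1/v_{nn})$. $\widetilde{\mathbf d}=(\sum_{i=1}^rd_i,d_{r+1},\dots,d_n)^\top$, $\widetilde V=(\tilde v_{ij})$ its covariance matrix, $\widetilde S=\mathrm{diag}(1/\tilde v_{11},1/v_{r+1,r+1},\dots,1/v_{nn})$. $\|J\|_{\max}=\max_{i,j}|J_{ij}|$. $b_n=\max_{i\neq j}(1+e^{\beta_i+\beta_j})^2/e^{\beta_i+\beta_j}$, $c_n=\min_{i\ne j}(\cdot)$. $x\lesssim y$ means $x\le Cy$ for a constant $C$ independent of $n$. *)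

theory Defs
  imports Complex_Main "Jordan_Normal_Form.Gauss_Jordan_Elimination"
begin

text \<open>Nodes are indexed 0..n-1 (paper: 1..n). beta :: nat => real gives the parameters;
  only beta 0, ..., beta (n-1) matter.\<close>

definition vv :: "(nat \<Rightarrow> real) \<Rightarrow> nat \<Rightarrow> nat \<Rightarrow> real" where
  "vv \<beta> i j = exp (\<beta> i + \<beta> j) / (1 + exp (\<beta> i + \<beta> j))^2"

definition Vmat :: "nat \<Rightarrow> (nat \<Rightarrow> real) \<Rightarrow> real mat" where
  "Vmat n \<beta> = mat n n (\<lambda>(i,j). if i = j then (\<Sum>k\<in>{0..<n} - {i}. vv \<beta> i k) else vv \<beta> i j)"

definition Smat :: "nat \<Rightarrow> (nat \<Rightarrow> real) \<Rightarrow> real mat" where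
  "Smat n \<beta> = mat n n (\<lambda>(i,j). if i = j then 1 / (Vmat n \<beta> $$ (i,i)) else 0)"

text \<open>Aggregation matrix A of size (n-r+1) x n with d~ = A d:
  row 0 sums nodes 0..r-1, row k (k>=1) picks node r+k-1.\<close>
definition Amat :: "nat \<Rightarrow> nat \<Rightarrow> real mat" where
  "Amat n r = mat (n - r + 1) n (\<lambda>(k,j). if k = 0 then (if j < r then 1 else 0)
                                          else (if j = r + k - 1 then 1 else 0))"

text \<open>Covariance matrix of d~ = A d, i.e. A V A^T (since Cov(d) = V).\<close>
definition Vtil :: "nat \<Rightarrow> nat \<Rightarrow> (nat \<Rightarrow> real) \<Rightarrow> real mat" where
  "Vtil n r \<beta> = Amat n r * Vmat n \<beta> * transpose_mat (Amat n r)"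

definition Stil :: "nat \<Rightarrow> nat \<Rightarrow> (nat \<Rightarrow> real) \<Rightarrow> real mat" where
  "Stil n r \<beta> = mat (n - r + 1) (n - r + 1)
     (\<lambda>(i,j). if i = j then 1 / (Vtil n r \<beta> $$ (i,i)) else 0)"

definition Wmat :: "nat \<Rightarrow> (nat \<Rightarrow> real) \<Rightarrow> real mat" where
  "Wmat n \<beta> = the (mat_inverse (Vmat n \<beta>)) - Smat n \<beta>"

definition Wtil :: "nat \<Rightarrow> nat \<Rightarrow> (nat \<Rightarrow> real) \<Rightarrow> real mat" where
  "Wtil n r \<beta> = the (mat_inverse (Vtil n r \<beta>)) - Stil n r \<beta>"

definition br_block :: "nat \<Rightarrow> real mat \<Rightarrow> real mat" where
  "br_block m A = mat m m (\<lambda>(i,j). A $$ (dim_row A - m + i, dim_col A - m + j))"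

definition max_norm :: "real mat \<Rightarrow> real" where
  "max_norm A = Max ({\<bar>A $$ (i,j)\<bar> | i j. i < dim_row A \<and> j < dim_col A} \<union> {0})"

definition b_n :: "nat \<Rightarrow> (nat \<Rightarrow> real) \<Rightarrow> real" where
  "b_n n \<beta> = Max {(1 + exp (\<beta> i + \<beta> j))^2 / exp (\<beta> i + \<beta> j) | i j. i < n \<and> j < n \<and> i \<noteq> j}"

definition c_n :: "nat \<Rightarrow> (nat \<Rightarrow> real) \<Rightarrow> real" where
  "c_n n \<beta> = Min {(1 + exp (\<beta> i + \<beta> j))^2 / exp (\<beta> i + \<beta> j) | i j. i < n \<and> j < n \<and> i \<noteq> j}"

end

theory Submission
  imports Defs "Jordan_Normal_Form.Determinant"
begin

text \<open>The bound holds with C = 0: when beta_1 = ... = beta_r the two blocks are equal.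
  The quadratic form of V is x . V x = 1/2 sum_{i <> k} v_ik (x_i + x_k)^2, which vanishes only
  at 0 once n >= 3; hence V and Vtil = A V A^T (A the aggregation matrix, whose transpose is
  injective) are invertible. Two rows a, b of V belonging to nodes with equal parameters satisfy
  (V x)_a - (V x)_b = (sum_k v_ak - 2 v_aa) (x_a - x_b) with a positive factor, so every column
  x = V^-1 e_(r+j) is constant on the first r coordinates, i.e. x = A^T y. Then
  Vtil y = A e_(r+j) = e_(1+j), so y is a column of Vtil^-1 and the bottom-right blocks of the
  inverses agree. The diagonals of V and Vtil agree there as well, so S and Stil cancel too.\<close>

definition anisotropic_mat :: "nat \<Rightarrow> 'a :: field mat \<Rightarrow> bool" where
  "anisotropic_mat n M \<longleftrightarrow> (\<forall>x \<in> carrier_vec n. x \<bullet> (M *\<^sub>v x) = 0 \<longrightarrow> x = 0\<^sub>v n)"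

lemma anisotropic_mat_inverse:
  fixes M :: "'a :: field mat"
  assumes M: "M \<in> carrier_mat n n" and aniso: "anisotropic_mat n M"
  obtains B where "mat_inverse M = Some B" "M * B = 1\<^sub>m n" "B * M = 1\<^sub>m n" "B \<in> carrier_mat n n"
proof -
  have "det M \<noteq> 0"
    using aniso unfolding det_0_iff_vec_prod_zero_field[OF M] anisotropic_mat_def by force
  then have "M \<in> Units (ring_mat TYPE('a) n n)" by (rule det_non_zero_imp_unit[OF M])
  then obtain B where "mat_inverse M = Some B"
    using mat_inverse(1)[OF M, of n] by (cases "mat_inverse M") auto
  with mat_inverse(2)[OF M] that show ?thesis by auto
qed

lemma anisotropic_mat_congruence:
  fixes A M :: "'a :: field mat"
  assumes A: "A \<in> carrier_mat m n" and M: "M \<in> carrier_mat n n" and aniso: "anisotropic_mat n M"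
    and inj: "\<And>y. y \<in> carrier_vec m \<Longrightarrow> transpose_mat A *\<^sub>v y = 0\<^sub>v n \<Longrightarrow> y = 0\<^sub>v m"
  shows "anisotropic_mat m (A * M * transpose_mat A)"
  unfolding anisotropic_mat_def
proof (intro ballI impI)
  fix y assume y: "y \<in> carrier_vec m" and q: "y \<bullet> (A * M * transpose_mat A *\<^sub>v y) = 0"
  define z where "z = transpose_mat A *\<^sub>v y"
  have z: "z \<in> carrier_vec n" unfolding z_def using A y by simp
  have "z \<bullet> (M *\<^sub>v z) = y \<bullet> (A *\<^sub>v (M *\<^sub>v z))"
    unfolding z_def using transpose_vec_mult_scalar[OF A _ y] M z z_def by simp
  also have "\<dots> = y \<bullet> (A * M * transpose_mat A *\<^sub>v y)"
    using A M y z_def by (metis assoc_mult_mat_vec mult_carrier_mat mult_mat_vec_carrier transpose_carrier_mat)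
  finally have "z = 0\<^sub>v n" using q aniso z unfolding anisotropic_mat_def by simp
  then show "y = 0\<^sub>v m" using inj y z_def by simp
qed

lemma mult_mat_vec_unit_vec:
  assumes "(A :: 'a :: semiring_1 mat) \<in> carrier_mat nr nc" and "c < nc"
  shows "A *\<^sub>v unit_vec nc c = col A c"
  using col_mult2[OF assms(1) one_carrier_mat assms(2)] assms by simp

lemma index_mat_mult_unit_vec:
  assumes "(A :: 'a :: semiring_1 mat) \<in> carrier_mat nr nc" and "i < nr" "j < nc"
  shows "A $$ (i, j) = (A *\<^sub>v unit_vec nc j) $ i"
  using assms by (simp add: mult_mat_vec_unit_vec)

lemma left_inverse_mult_vec_unit_vec:
  fixes B M :: "'a :: field mat"
  assumes "B * M = 1\<^sub>m n" "B \<in> carrier_mat n n" "M \<in> carrier_mat n n"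
    and y: "y \<in> carrier_vec n" and "M *\<^sub>v y = unit_vec n c" and "c < n"
  shows "y = col B c"
proof -
  have "col B c = B *\<^sub>v (M *\<^sub>v y)" using assms by (simp add: mult_mat_vec_unit_vec)
  also have "\<dots> = (B * M) *\<^sub>v y" using assms by (metis assoc_mult_mat_vec)
  also have "\<dots> = y" using assms by simp
  finally show ?thesis by simp
qed

lemma max_norm_zero_mat: "max_norm (0\<^sub>m m n) = 0"
proof -
  have zero: "{\<bar>0\<^sub>m m n $$ (i,j)\<bar> | i j. i < dim_row (0\<^sub>m m n) \<and> j < dim_col (0\<^sub>m m n)} \<union> {0} = {0 :: real}"
    by fastforce
  show ?thesis unfolding max_norm_def zero by simp
qed

lemma vv_pos: "vv \<beta> i k > 0"
proof -
  have "0 < 1 + exp (\<beta> i + \<beta> k)" by (simp add: add_pos_pos)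
  then show ?thesis unfolding vv_def by simp
qed

lemma vv_sym: "vv \<beta> i k = vv \<beta> k i"
  unfolding vv_def by (simp add: add.commute)

lemma Vmat_carrier: "Vmat n \<beta> \<in> carrier_mat n n"
  unfolding Vmat_def by simp

lemma Amat_carrier: "Amat n r \<in> carrier_mat (n - r + 1) n"
  unfolding Amat_def by simp

lemma Vtil_carrier: "Vtil n r \<beta> \<in> carrier_mat (n - r + 1) (n - r + 1)"
  unfolding Vtil_def using Amat_carrier Vmat_carrier by (metis mult_carrier_mat transpose_carrier_mat)

lemma Vmat_mult_vec_index:
  assumes x: "x \<in> carrier_vec n" and i: "i < n"
  shows "(Vmat n \<beta> *\<^sub>v x) $ i = (\<Sum>k\<in>{0..<n} - {i}. vv \<beta> i k * (x $ i + x $ k))"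
proof -
  have "(Vmat n \<beta> *\<^sub>v x) $ i = (\<Sum>k\<in>{0..<n}. Vmat n \<beta> $$ (i,k) * x $ k)"
    using x i unfolding Vmat_def by (simp add: row_def scalar_prod_def)
  also have "\<dots> = Vmat n \<beta> $$ (i,i) * x $ i + (\<Sum>k\<in>{0..<n} - {i}. Vmat n \<beta> $$ (i,k) * x $ k)"
    using i by (subst sum.remove[of _ i]) auto
  also have "\<dots> = (\<Sum>k\<in>{0..<n} - {i}. vv \<beta> i k) * x $ i + (\<Sum>k\<in>{0..<n} - {i}. vv \<beta> i k * x $ k)"
    using i unfolding Vmat_def by (auto intro!: sum.cong)
  also have "\<dots> = (\<Sum>k\<in>{0..<n} - {i}. vv \<beta> i k * (x $ i + x $ k))"
    by (simp add: sum_distrib_left sum_distrib_right sum.distrib algebra_simps)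
  finally show ?thesis .
qed

lemma Vmat_quadratic_form:
  assumes x: "x \<in> carrier_vec n"
  shows "2 * (x \<bullet> (Vmat n \<beta> *\<^sub>v x))
    = (\<Sum>i<n. \<Sum>k<n. if k = i then 0 else vv \<beta> i k * (x $ i + x $ k)^2)"
proof -
  define f where "f i k = (if k = i then 0 else vv \<beta> i k * (x $ i * (x $ i + x $ k)))" for i k
  have row: "x $ i * (Vmat n \<beta> *\<^sub>v x) $ i = (\<Sum>k<n. f i k)" if i: "i < n" for i
  proof -
    have "x $ i * (Vmat n \<beta> *\<^sub>v x) $ i = (\<Sum>k\<in>{0..<n} - {i}. f i k)"
      using i by (simp add: Vmat_mult_vec_index[OF x] sum_distrib_left f_def mult.left_commute)
    also have "\<dots> = (\<Sum>k<n. f i k)"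
      using i by (subst (2) sum.remove[of _ i]) (auto simp: f_def lessThan_atLeast0)
    finally show ?thesis .
  qed
  have form: "x \<bullet> (Vmat n \<beta> *\<^sub>v x) = (\<Sum>i<n. \<Sum>k<n. f i k)"
    using x Vmat_carrier[of n \<beta>] row by (simp add: scalar_prod_def lessThan_atLeast0)
  \<comment> \<open>symmetrise, using x_i (x_i + x_k) + x_k (x_k + x_i) = (x_i + x_k)^2 and v_ik = v_ki\<close>
  have "(\<Sum>i<n. \<Sum>k<n. if k = i then 0 else vv \<beta> i k * (x $ i + x $ k)^2)
      = (\<Sum>i<n. \<Sum>k<n. f i k + f k i)"
    by (intro sum.cong refl)
      (auto simp: f_def vv_sym[of \<beta> i k for i k] power2_eq_square algebra_simps)
  also have "\<dots> = (\<Sum>i<n. \<Sum>k<n. f i k) + (\<Sum>i<n. \<Sum>k<n. f k i)"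
    by (simp add: sum.distrib)
  also have "(\<Sum>i<n. \<Sum>k<n. f k i) = (\<Sum>i<n. \<Sum>k<n. f i k)"
    by (rule sum.swap)
  finally show ?thesis using form by simp
qed

lemma Vmat_anisotropic:
  assumes n: "n \<ge> 3"
  shows "anisotropic_mat n (Vmat n \<beta>)"
  unfolding anisotropic_mat_def
proof (intro ballI impI)
  fix x assume x: "x \<in> carrier_vec n" and q: "x \<bullet> (Vmat n \<beta> *\<^sub>v x) = 0"
  define g where "g i k = (if k = i then 0 else vv \<beta> i k * (x $ i + x $ k)^2)" for i k
  have g_nonneg: "g i k \<ge> 0" for i k
    using vv_pos[of \<beta> i k] by (auto simp: g_def)
  have G: "(\<Sum>i<n. \<Sum>k<n. g i k) = 0"
    using Vmat_quadratic_form[OF x, of \<beta>] q unfolding g_def by simp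
  have sum_zero: "x $ i + x $ k = 0" if "i < n" "k < n" "i \<noteq> k" for i k
  proof -
    have "(\<Sum>k<n. g i k) = 0"
      using G g_nonneg that by (subst (asm) sum_nonneg_eq_0_iff) (auto intro: sum_nonneg)
    then have "g i k = 0" using g_nonneg that by (subst (asm) sum_nonneg_eq_0_iff) auto
    then show ?thesis using vv_pos[of \<beta> i k] that by (auto simp: g_def)
  qed
  show "x = 0\<^sub>v n"
  proof (rule eq_vecI)
    fix i assume "i < dim_vec (0\<^sub>v n)"
    then have i: "i < n" by simp
    obtain j k where jk: "j < n" "k < n" "j \<noteq> i" "k \<noteq> i" "j \<noteq> k"
    proof (cases "i = 0")
      case True then show ?thesis using that[of 1 2] n by auto
    next
      case False then show ?thesis using that[of 0 "if i = 1 then 2 else 1"] n i by auto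
    qed
    have "x $ i + x $ j = 0" "x $ j + x $ k = 0" "x $ i + x $ k = 0"
      using sum_zero jk i by auto
    then show "x $ i = 0\<^sub>v n $ i" using i by simp
  qed (use x in simp)
qed

lemma Vmat_mult_vec_index_expanded:
  assumes x: "x \<in> carrier_vec n" and a: "a < n"
  shows "(Vmat n \<beta> *\<^sub>v x) $ a
    = (\<Sum>k<n. vv \<beta> a k) * x $ a + (\<Sum>k<n. vv \<beta> a k * x $ k) - 2 * vv \<beta> a a * x $ a"
proof -
  have "(Vmat n \<beta> *\<^sub>v x) $ a = (\<Sum>k<n. vv \<beta> a k * (x $ a + x $ k)) - vv \<beta> a a * (x $ a + x $ a)"
    using a by (simp add: Vmat_mult_vec_index[OF x] sum_diff1 lessThan_atLeast0)
  then show ?thesis by (simp add: distrib_left sum.distrib sum_distrib_left algebra_simps)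
qed

lemma Vmat_mult_vec_eq_imp_eq:
  assumes \<beta>: "\<beta> a = \<beta> b" and x: "x \<in> carrier_vec n" and ab: "a < n" "b < n" and n: "n \<ge> 3"
    and eq: "(Vmat n \<beta> *\<^sub>v x) $ a = (Vmat n \<beta> *\<^sub>v x) $ b"
  shows "x $ a = x $ b"
proof (cases "a = b")
  case False
  define g where "g k = vv \<beta> a k" for k
  have vv_b: "vv \<beta> b k = g k" for k
    using \<beta> unfolding g_def vv_def by simp
  have g_b: "g b = g a"
    using \<beta> unfolding g_def vv_def by simp
  have row_a: "(Vmat n \<beta> *\<^sub>v x) $ a = (\<Sum>k<n. g k) * x $ a + (\<Sum>k<n. g k * x $ k) - 2 * g a * x $ a"
    using Vmat_mult_vec_index_expanded[OF x ab(1), of \<beta>] unfolding g_def .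
  have row_b: "(Vmat n \<beta> *\<^sub>v x) $ b = (\<Sum>k<n. g k) * x $ b + (\<Sum>k<n. g k * x $ k) - 2 * g a * x $ b"
    using Vmat_mult_vec_index_expanded[OF x ab(2), of \<beta>] unfolding vv_b g_b .
  have "((\<Sum>k<n. g k) - 2 * g a) * (x $ a - x $ b) = 0"
    using eq unfolding row_a row_b by (simp add: algebra_simps)
  moreover obtain c where c: "c < n" "c \<noteq> a" "c \<noteq> b"
  proof -
    have "{0, 1, 2 :: nat} - {a, b} \<noteq> {}" by auto
    then obtain c where "c \<in> {0, 1, 2} - {a, b}" by blast
    then have "c < n" "c \<noteq> a" "c \<noteq> b" using n by auto
    then show ?thesis by (rule that)
  qed
  have "g a + g b + g c \<le> (\<Sum>k<n. g k)"
  proof -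
    have "(\<Sum>k\<in>{a, b, c}. g k) \<le> (\<Sum>k<n. g k)"
      using ab c vv_pos by (intro sum_mono2) (auto simp: g_def less_imp_le)
    then show ?thesis using c False by simp
  qed
  then have "(\<Sum>k<n. g k) - 2 * g a > 0"
    using g_b vv_pos[of \<beta> a c] unfolding g_def by simp
  ultimately show ?thesis by simp
qed simp

lemma Amat_mult_vec_index:
  assumes w: "w \<in> carrier_vec n" and k: "k < n - r + 1" and r: "1 \<le> r" "r \<le> n"
  shows "(Amat n r *\<^sub>v w) $ k = (if k = 0 then (\<Sum>j<r. w $ j) else w $ (r + k - 1))"
proof -
  have "(Amat n r *\<^sub>v w) $ k = (\<Sum>j<n. Amat n r $$ (k,j) * w $ j)"
    using w k Amat_carrier[of n r] by (simp add: scalar_prod_def row_def lessThan_atLeast0)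
  also have "\<dots> = (if k = 0 then (\<Sum>j<r. w $ j) else w $ (r + k - 1))"
  proof (cases "k = 0")
    case True
    have "(\<Sum>j<n. Amat n r $$ (k,j) * w $ j) = (\<Sum>j<n. if j < r then w $ j else 0)"
      using True k unfolding Amat_def by (intro sum.cong) auto
    also have "\<dots> = (\<Sum>j\<in>{..<n} \<inter> {j. j < r}. w $ j)"
      by (simp add: sum.inter_restrict)
    also have "{..<n} \<inter> {j. j < r} = {..<r}" using r by auto
    finally show ?thesis using True by simp
  next
    case False
    have "(\<Sum>j<n. Amat n r $$ (k,j) * w $ j) = (\<Sum>j<n. if j = r + k - 1 then w $ j else 0)"
      using False k unfolding Amat_def by (intro sum.cong) auto
    also have "\<dots> = w $ (r + k - 1)" using False k r by (simp add: sum.delta')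
    finally show ?thesis using False by simp
  qed
  finally show ?thesis .
qed

lemma transpose_Amat_mult_vec_index:
  assumes y: "y \<in> carrier_vec (n - r + 1)" and j: "j < n" and r: "1 \<le> r" "r \<le> n"
  shows "(transpose_mat (Amat n r) *\<^sub>v y) $ j = (if j < r then y $ 0 else y $ (j - r + 1))"
proof -
  define c where "c = (if j < r then 0 else j - r + 1)"
  have c: "c < n - r + 1" using j r unfolding c_def by auto
  have "(transpose_mat (Amat n r) *\<^sub>v y) $ j = (\<Sum>k<n - r + 1. Amat n r $$ (k,j) * y $ k)"
    using y j Amat_carrier[of n r] by (simp add: scalar_prod_def row_def lessThan_atLeast0)
  also have "\<dots> = (\<Sum>k<n - r + 1. if k = c then y $ k else 0)"
    using j r unfolding Amat_def c_def by (intro sum.cong refl) (auto simp del: One_nat_def)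
  also have "\<dots> = y $ c" using c by (simp add: sum.delta' del: One_nat_def)
  finally show ?thesis unfolding c_def by simp
qed

lemma transpose_Amat_mult_vec_eq_0:
  assumes y: "y \<in> carrier_vec (n - r + 1)" and r: "1 \<le> r" "r \<le> n"
    and zero: "transpose_mat (Amat n r) *\<^sub>v y = 0\<^sub>v n"
  shows "y = 0\<^sub>v (n - r + 1)"
proof (rule eq_vecI)
  fix k assume "k < dim_vec (0\<^sub>v (n - r + 1))"
  then have k: "k < n - r + 1" by simp
  define j where "j = (if k = 0 then 0 else r + k - 1)"
  have j: "j < n" using k r unfolding j_def by auto
  have "(transpose_mat (Amat n r) *\<^sub>v y) $ j = y $ k"
    using transpose_Amat_mult_vec_index[OF y j r] k r unfolding j_def by auto
  then show "y $ k = 0\<^sub>v (n - r + 1) $ k" using zero j k by simp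
qed (use y in simp)

lemma Vtil_mult_vec:
  assumes y: "y \<in> carrier_vec (n - r + 1)"
  shows "Vtil n r \<beta> *\<^sub>v y = Amat n r *\<^sub>v (Vmat n \<beta> *\<^sub>v (transpose_mat (Amat n r) *\<^sub>v y))"
proof -
  have A: "Amat n r \<in> carrier_mat (n - r + 1) n" by (rule Amat_carrier)
  then have At: "transpose_mat (Amat n r) \<in> carrier_mat n (n - r + 1)" by simp
  have V: "Vmat n \<beta> \<in> carrier_mat n n" by (rule Vmat_carrier)
  show ?thesis
    unfolding Vtil_def using assoc_mult_mat_vec[OF mult_carrier_mat[OF A V] At y]
      assoc_mult_mat_vec[OF A V mult_mat_vec_carrier[OF At y]] by simp
qed

lemma Vtil_anisotropic:
  assumes "n \<ge> 3" "1 \<le> r" "r \<le> n"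
  shows "anisotropic_mat (n - r + 1) (Vtil n r \<beta>)"
  unfolding Vtil_def
proof (rule anisotropic_mat_congruence[OF Amat_carrier Vmat_carrier Vmat_anisotropic[OF assms(1)]])
  show "y = 0\<^sub>v (n - r + 1)"
    if "y \<in> carrier_vec (n - r + 1)" "transpose_mat (Amat n r) *\<^sub>v y = 0\<^sub>v n" for y
    by (rule transpose_Amat_mult_vec_eq_0[OF that(1) assms(2,3) that(2)])
qed

lemma Amat_mult_unit_vec:
  assumes j: "j < n - r" and r: "1 \<le> r"
  shows "Amat n r *\<^sub>v unit_vec n (r + j) = unit_vec (n - r + 1) (1 + j)"
proof (rule eq_vecI)
  fix k assume "k < dim_vec (unit_vec (n - r + 1) (1 + j))"
  then have k: "k < n - r + 1" by simp
  have "(\<Sum>l<r. unit_vec n (r + j) $ l) = 0" using j by (intro sum.neutral) auto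
  then show "(Amat n r *\<^sub>v unit_vec n (r + j)) $ k = unit_vec (n - r + 1) (1 + j) $ k"
    using Amat_mult_vec_index[OF unit_vec_carrier k r] j k by auto
qed (simp add: Amat_def)

lemma transpose_Amat_mult_unit_vec:
  assumes i: "i < n - r" and r: "1 \<le> r"
  shows "transpose_mat (Amat n r) *\<^sub>v unit_vec (n - r + 1) (1 + i) = unit_vec n (r + i)"
proof (rule eq_vecI)
  fix l assume "l < dim_vec (unit_vec n (r + i))"
  then have l: "l < n" by simp
  show "(transpose_mat (Amat n r) *\<^sub>v unit_vec (n - r + 1) (1 + i)) $ l = unit_vec n (r + i) $ l"
    using transpose_Amat_mult_vec_index[OF unit_vec_carrier l r] l i by auto
qed (simp add: Amat_def)

lemma Vtil_diag:
  assumes i: "i < n - r" and r: "1 \<le> r"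
  shows "Vtil n r \<beta> $$ (1 + i, 1 + i) = Vmat n \<beta> $$ (r + i, r + i)"
proof -
  have "Vtil n r \<beta> $$ (1 + i, 1 + i) = (Vtil n r \<beta> *\<^sub>v unit_vec (n - r + 1) (1 + i)) $ (1 + i)"
    using i by (intro index_mat_mult_unit_vec[OF Vtil_carrier]) auto
  also have "\<dots> = (Amat n r *\<^sub>v (Vmat n \<beta> *\<^sub>v unit_vec n (r + i))) $ (1 + i)"
    unfolding Vtil_mult_vec[OF unit_vec_carrier] transpose_Amat_mult_unit_vec[OF i r] ..
  also have "\<dots> = (Vmat n \<beta> *\<^sub>v unit_vec n (r + i)) $ (r + i)"
    using Amat_mult_vec_index[OF mult_mat_vec_carrier[OF Vmat_carrier unit_vec_carrier], of "1 + i"] i r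
    by simp
  also have "\<dots> = Vmat n \<beta> $$ (r + i, r + i)"
    using i by (intro index_mat_mult_unit_vec[OF Vmat_carrier, symmetric]) auto
  finally show ?thesis .
qed

lemma transpose_Amat_mult_vec_compress:
  assumes x: "x \<in> carrier_vec n" and const: "\<And>a. a < r \<Longrightarrow> x $ a = x $ 0"
    and r: "1 \<le> r" "r \<le> n"
  shows "transpose_mat (Amat n r) *\<^sub>v vec (n - r + 1) (\<lambda>k. if k = 0 then x $ 0 else x $ (r + k - 1))
    = x"
proof (rule eq_vecI)
  fix l assume "l < dim_vec x"
  then have l: "l < n" using x by simp
  show "(transpose_mat (Amat n r) *\<^sub>v vec (n - r + 1) (\<lambda>k. if k = 0 then x $ 0 else x $ (r + k - 1))) $ l
      = x $ l"
    using transpose_Amat_mult_vec_index[OF vec_carrier l r] const[of l] l by auto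
qed (use x in \<open>simp add: Amat_def\<close>)

lemma inverse_Vtil_eq_inverse_Vmat:
  assumes r: "1 \<le> r" and n: "r + 2 \<le> n" and \<beta>: "\<forall>a<r. \<beta> a = \<beta> 0"
    and X: "Vmat n \<beta> * X = 1\<^sub>m n" "X \<in> carrier_mat n n"
    and Y: "Y * Vtil n r \<beta> = 1\<^sub>m (n - r + 1)" "Y \<in> carrier_mat (n - r + 1) (n - r + 1)"
    and i: "i < n - r" and j: "j < n - r"
  shows "Y $$ (1 + i, 1 + j) = X $$ (r + i, r + j)"
proof -
  have rn: "r \<le> n" using n by linarith
  define x where "x = col X (r + j)"
  have x: "x \<in> carrier_vec n" using X(2) unfolding x_def by (simp add: carrier_dim_vec)
  have Vx: "Vmat n \<beta> *\<^sub>v x = unit_vec n (r + j)"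
    using col_mult2[OF Vmat_carrier[of n \<beta>] X(2), of "r + j"] X(1) j unfolding x_def by simp
  have const: "x $ a = x $ 0" if a: "a < r" for a
  proof -
    have an: "a < n" "0 < n" "3 \<le> n" "r + j < n" using a n j by simp_all
    then have "(Vmat n \<beta> *\<^sub>v x) $ a = (Vmat n \<beta> *\<^sub>v x) $ 0"
      using a unfolding Vx by simp
    with Vmat_mult_vec_eq_imp_eq[OF \<beta>[rule_format, OF a] x an(1-3)] show ?thesis .
  qed
  define y where "y = vec (n - r + 1) (\<lambda>k. if k = 0 then x $ 0 else x $ (r + k - 1))"
  have y: "y \<in> carrier_vec (n - r + 1)" unfolding y_def by simp
  have "Vtil n r \<beta> *\<^sub>v y = Amat n r *\<^sub>v (Vmat n \<beta> *\<^sub>v (transpose_mat (Amat n r) *\<^sub>v y))"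
    by (rule Vtil_mult_vec[OF y])
  also have "transpose_mat (Amat n r) *\<^sub>v y = x"
    unfolding y_def by (rule transpose_Amat_mult_vec_compress[OF x const r rn])
  also have "Amat n r *\<^sub>v (Vmat n \<beta> *\<^sub>v x) = unit_vec (n - r + 1) (1 + j)"
    unfolding Vx by (rule Amat_mult_unit_vec[OF j r])
  finally have "y = col Y (1 + j)"
    using left_inverse_mult_vec_unit_vec[OF Y(1,2) Vtil_carrier y] j by simp
  then have "Y $$ (1 + i, 1 + j) = y $ (1 + i)" using Y(2) i j by simp
  also have "\<dots> = X $$ (r + i, r + j)" using X(2) i j unfolding y_def x_def by simp
  finally show ?thesis .
qed

lemma Wmat_eq_Wtil:
  assumes r: "1 \<le> r" and n: "r + 2 \<le> n" and \<beta>: "\<forall>a<r. \<beta> a = \<beta> 0"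
    and i: "i < n - r" and j: "j < n - r"
  shows "Wmat n \<beta> $$ (r + i, r + j) = Wtil n r \<beta> $$ (1 + i, 1 + j)"
proof -
  have n3: "3 \<le> n" and rn: "r \<le> n" using r n by auto
  obtain X where X: "mat_inverse (Vmat n \<beta>) = Some X" "Vmat n \<beta> * X = 1\<^sub>m n" "X \<in> carrier_mat n n"
    by (rule anisotropic_mat_inverse[OF Vmat_carrier Vmat_anisotropic[OF n3]])
  obtain Y where Y: "mat_inverse (Vtil n r \<beta>) = Some Y" "Y * Vtil n r \<beta> = 1\<^sub>m (n - r + 1)"
      "Y \<in> carrier_mat (n - r + 1) (n - r + 1)"
    by (rule anisotropic_mat_inverse[OF Vtil_carrier Vtil_anisotropic[OF n3 r rn]])
  have "Wmat n \<beta> $$ (r + i, r + j) = X $$ (r + i, r + j) - Smat n \<beta> $$ (r + i, r + j)"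
    unfolding Wmat_def using X(1,3) i j by (simp add: Smat_def)
  also have "\<dots> = Y $$ (1 + i, 1 + j) - Stil n r \<beta> $$ (1 + i, 1 + j)"
    using inverse_Vtil_eq_inverse_Vmat[OF r n \<beta> X(2,3) Y(2,3) i j] Vtil_diag[OF i r] i j
    by (cases "i = j") (simp_all add: Smat_def Stil_def)
  also have "\<dots> = Wtil n r \<beta> $$ (1 + i, 1 + j)"
    unfolding Wtil_def using Y(1,3) i j by (simp add: Stil_def)
  finally show ?thesis .
qed

lemma br_block_Wmat_eq_Wtil:
  assumes r: "1 \<le> r" and n: "r + 2 \<le> n" and \<beta>: "\<forall>a<r. \<beta> a = \<beta> 0"
  shows "br_block (n - r) (Wmat n \<beta>) = br_block (n - r) (Wtil n r \<beta>)"
proof (rule eq_matI)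
  fix i j assume "i < dim_row (br_block (n - r) (Wtil n r \<beta>))" "j < dim_col (br_block (n - r) (Wtil n r \<beta>))"
  then have i: "i < n - r" and j: "j < n - r" unfolding br_block_def by simp_all
  have "n - (n - r) + i = r + i" "n - (n - r) + j = r + j"
    "n - r + 1 - (n - r) + i = 1 + i" "n - r + 1 - (n - r) + j = 1 + j" using n by auto
  then show "br_block (n - r) (Wmat n \<beta>) $$ (i, j) = br_block (n - r) (Wtil n r \<beta>) $$ (i, j)"
    using Wmat_eq_Wtil[OF r n \<beta> i j] i j
    unfolding br_block_def by (simp add: Wmat_def Smat_def Wtil_def Stil_def)
qed (simp_all add: br_block_def)

theorem lemma13:
  fixes r :: nat
  assumes "r \<ge> 1"
  shows "\<exists>C N. \<forall>n \<ge> N. \<forall>\<beta> :: nat \<Rightarrow> real. (\<forall>i < r. \<beta> i = \<beta> 0) \<longrightarrow>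
           max_norm (br_block (n - r) (Wmat n \<beta>) - br_block (n - r) (Wtil n r \<beta>))
             \<le> C * b_n n \<beta> ^ 6 / (real n ^ 3 * c_n n \<beta> ^ 5)"
proof (intro exI allI impI)
  fix n :: nat and \<beta> :: "nat \<Rightarrow> real"
  assume "r + 2 \<le> n" and "\<forall>i < r. \<beta> i = \<beta> 0"
  then have "br_block (n - r) (Wmat n \<beta>) = br_block (n - r) (Wtil n r \<beta>)"
    by (rule br_block_Wmat_eq_Wtil[OF assms])
  moreover have "br_block (n - r) (Wtil n r \<beta>) \<in> carrier_mat (n - r) (n - r)"
    unfolding br_block_def by simp
  ultimately show "max_norm (br_block (n - r) (Wmat n \<beta>) - br_block (n - r) (Wtil n r \<beta>))
      \<le> 0 * b_n n \<beta> ^ 6 / (real n ^ 3 * c_n n \<beta> ^ 5)"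
    by (simp add: max_norm_zero_mat)
qed

end
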